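(* Let $n$ be a positive integer with $\lambda^{3n/2}>2(1+\sqrt2)C_1$. Then $c_n>0$ and $$\big|\lambda^{n/2}-\sqrt{3\theta^2-p}\cdot c_n^{1/2}\big|<\frac{\sqrt2 C_1}{\lambda^n}.$$
   Context: Standing setup: $p,q\in\mathbb{Z}$ are such that $x^3-px-q$ is irreducible over $\mathbb{Q}$ with exactly one real root $\theta$ (one has $3\theta^2-4p>0$ and $3\theta^2-p>0$). $K=\mathbb{Q}(\theta)\subset\mathbb{R}$, $\mathcal{O}_K$ its ring of integers. $d$ is a positive integer with $\mathcal{O}_K\subseteq\frac1d\mathbb{Z}[\theta]$. $\lambda\in\mathcal{O}_K$ is a unit with $\lambda>1$. For $n\ge1$ the rationals $a_n,b_n,c_n$ are defined by $a_n+b_n\theta+c_n\theta^2=\lambda^n$, and $X_n=a_n+pc_n-b_n\theta$, $Y_n=a_n+pc_n-c_n\theta^2$, $Z_n=b_n\theta-c_n\theta^2$, $k_n=dc_n$. Constants: $C_1=\max\{\sqrt2,\ \frac{\sqrt2|\theta|}{\sqrt{3\theta^2-4p}}\}$, $C_2=\frac{\sqrt d}{\sqrt{3\theta^2-p}}$. *)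

theory Defs
  imports "HOL-Analysis.Analysis" "HOL-Computational_Algebra.Computational_Algebra"
begin

(* K = Q(theta): since theta has degree 3, K = {a + b theta + c theta^2 | a b c rational} *)
definition in_field_K :: "real \<Rightarrow> real \<Rightarrow> bool" where
  "in_field_K \<theta> x \<longleftrightarrow> (\<exists>a b c :: rat. x = of_rat a + of_rat b * \<theta> + of_rat c * \<theta>^2)"

definition in_OK :: "real \<Rightarrow> real \<Rightarrow> bool" where
  "in_OK \<theta> x \<longleftrightarrow> in_field_K \<theta> x \<and> algebraic_int x"

definition unit_OK :: "real \<Rightarrow> real \<Rightarrow> bool" where
  "unit_OK \<theta> x \<longleftrightarrow> in_OK \<theta> x \<and> x \<noteq> 0 \<and> in_OK \<theta> (inverse x)"

end

theory Submission
  imports Defs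
begin

text \<open>For \<open>\<alpha> = a + b\<theta> + c\<theta>\<^sup>2 \<in> K\<close> the norm factors as \<open>N(\<alpha>) = \<alpha> |\<alpha>'|\<^sup>2\<close>, where \<open>\<alpha>'\<close>
  is a non-real conjugate, and \<open>|\<alpha>'|\<^sup>2\<close> is a positive definite quadratic form in \<open>a, b, c\<close>.
  The norm of an algebraic integer of \<open>K\<close> is a rational integer, so for the unit \<open>\<lambda>\<^sup>n\<close>
  we get \<open>\<lambda>\<^sup>n |\<alpha>'|\<^sup>2 = 1\<close>. The defect \<open>c (3\<theta>\<^sup>2 - p) - \<lambda>\<^sup>n\<close> is a linear form in the two
  coordinates of \<open>\<alpha>'\<close>, so by Cauchy--Schwarz it is \<open>O(C\<^sub>1 \<lambda>\<^sup>-\<^sup>n\<^sup>/\<^sup>2)\<close>; taking square roots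
  gives the approximation of \<open>\<lambda>\<^sup>n\<^sup>/\<^sup>2\<close> with error \<open>O(C\<^sub>1 \<lambda>\<^sup>-\<^sup>n)\<close>.\<close>

text \<open>Multiplication in \<open>\<rat>[x]/(x\<^sup>3 - p x - q)\<close> in the basis \<open>1, x, x\<^sup>2\<close>, and the
  norm, i.e. the determinant of multiplication by \<open>a + b x + c x\<^sup>2\<close>.\<close>

definition cubic_mult :: "'a::comm_ring_1 \<Rightarrow> 'a \<Rightarrow> 'a \<times> 'a \<times> 'a \<Rightarrow> 'a \<times> 'a \<times> 'a \<Rightarrow> 'a \<times> 'a \<times> 'a" where
  "cubic_mult p q = (\<lambda>(a, b, c) (a', b', c').
     (a*a' + q*(b*c' + c*b'), a*b' + b*a' + p*(b*c' + c*b') + q*c*c', a*c' + b*b' + c*a' + p*c*c'))"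

definition cubic_norm :: "'a::comm_ring_1 \<Rightarrow> 'a \<Rightarrow> 'a \<times> 'a \<times> 'a \<Rightarrow> 'a" where
  "cubic_norm p q = (\<lambda>(a, b, c).
     a*(a + c*p)^2 - a*b*(b*p + c*q) - c*q*b*(a + c*p) + c^2*q*(b*p + c*q) + b^3*q - b*c*q*(a + c*p))"

lemma cubic_norm_mult: "cubic_norm p q (cubic_mult p q s t) = cubic_norm p q s * cubic_norm p q t"
  by (cases s rule: prod_cases3; cases t rule: prod_cases3)
     (simp add: cubic_norm_def cubic_mult_def algebra_simps power2_eq_square power3_eq_cube)

lemma cubic_norm_of_int:
  "cubic_norm (of_int p) (of_int q) (of_int a, of_int b, of_int c) = of_int (cubic_norm p q (a, b, c))"
  by (simp add: cubic_norm_def)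

lemma cubic_norm_divide:
  fixes p q a b c e :: "'a::field"
  assumes "e \<noteq> 0"
  shows "cubic_norm p q (a/e, b/e, c/e) = cubic_norm p q (a, b, c) / e^3"
  using assms by (simp add: cubic_norm_def field_simps power2_eq_square power3_eq_cube)

lemma Ints_if_scaled_powers_in_Ints:
  fixes r :: rat and e :: int
  assumes e: "e > 0" and powers: "\<And>k. of_int e * r^k \<in> \<int>"
  shows "r \<in> \<int>"
proof -
  obtain a b where qo: "quotient_of r = (a, b)" by (cases "quotient_of r") auto
  have r: "r = of_int a / of_int b" and b: "b > 0" and cop: "coprime a b"
    using quotient_of_div[OF qo] quotient_of_denom_pos[OF qo] quotient_of_coprime[OF qo] by auto
  define k where "k = nat e"
  obtain z where "of_int e * r^k = of_int z" using powers by (meson Ints_cases)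
  then have "of_int e * of_int a ^ k = (of_int z * of_int b ^ k :: rat)"
    using b unfolding r by (simp add: field_simps power_divide)
  then have "e * a^k = z * b^k" by (metis of_int_eq_iff of_int_mult of_int_power)
  then have "b^k dvd e * a^k" by (metis dvd_triv_right)
  moreover have "coprime (b^k) (a^k)" using cop by (simp add: coprime_commute)
  ultimately have "b^k dvd e" using coprime_dvd_mult_left_iff by blast
  then have le: "b^k \<le> e" using e by (simp add: zdvd_imp_le)
  have "b = 1"
  proof (rule ccontr)
    assume "b \<noteq> 1"
    with b have "(2::int)^k \<le> b^k" by (simp add: power_mono)
    moreover have "int k < 2^k" by (metis of_nat_less_iff of_nat_numeral of_nat_power less_exp)
    ultimately show False using le e unfolding k_def by simp
  qed
  then show ?thesis unfolding r by simp
qed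

locale real_cubic_field =
  fixes p q :: int and \<theta> :: real
  assumes irred: "irreducible ([:of_int (-q), of_int (-p), 0, 1:] :: rat poly)"
    and root: "\<theta>^3 - of_int p * \<theta> - of_int q = 0"
    and unique_root: "\<forall>x::real. x^3 - of_int p * x - of_int q = 0 \<longrightarrow> x = \<theta>"
begin

lemma no_rat_root: "r^3 - of_int p * r - of_int q \<noteq> (0::rat)"
proof
  assume "r^3 - of_int p * r - of_int q = 0"
  then have "([:of_int (-q), of_int (-p), 0, 1:] :: rat poly) = [:-r, 1:] * [:r^2 - of_int p, r, 1:]"
    by (simp add: algebra_simps power2_eq_square power3_eq_cube)
  from irreducibleD[OF irred this] show False
    by (auto simp: is_unit_iff_degree)
qed

lemma theta_neq_of_rat: "\<theta> \<noteq> of_rat r"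
proof
  assume "\<theta> = of_rat r"
  with root have "of_rat (r^3 - of_int p * r - of_int q) = (0::real)"
    by (simp add: of_rat_diff of_rat_mult of_rat_power)
  with no_rat_root show False by simp
qed

lemma coords_eq_0:
  assumes h: "of_rat a + of_rat b * \<theta> + of_rat c * \<theta>^2 = 0"
  shows "a = 0 \<and> b = 0 \<and> c = 0"
proof (cases "c = 0")
  case False
  define k where "k = a*c - b^2 + c^2 * of_int p"
  define m where "m = a*b - c^2 * of_int q"
  \<comment> \<open>multiplying the relation by \<open>c\<theta> - b\<close> and reducing \<open>\<theta>\<^sup>3\<close> leaves a linear one\<close>
  have "\<theta> * of_rat k - of_rat m
     = (of_rat c * \<theta> - of_rat b) * (of_rat a + of_rat b * \<theta> + of_rat c * \<theta>^2)
       - (of_rat c)^2 * (\<theta>^3 - of_int p * \<theta> - of_int q)"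
    unfolding k_def m_def
    by (simp add: of_rat_add of_rat_diff of_rat_mult of_rat_power algebra_simps power2_eq_square power3_eq_cube)
  also have "\<dots> = 0" using h root by simp
  finally have lin: "\<theta> * of_rat k = of_rat m" by simp
  show ?thesis
  proof (cases "k = 0")
    case False
    then have "\<theta> = of_rat (m / k)" using lin by (simp add: of_rat_divide field_simps)
    with theta_neq_of_rat show ?thesis by blast
  next
    case True
    then have "m = 0" using lin by simp
    have "(b/c)^3 - of_int p * (b/c) - of_int q = (b*(b^2 - c^2 * of_int p) - c*(c^2 * of_int q)) / c^3"
      using \<open>c \<noteq> 0\<close> by (simp add: field_simps power2_eq_square power3_eq_cube)
    also have "b*(b^2 - c^2 * of_int p) - c*(c^2 * of_int q) = 0"
      using True \<open>m = 0\<close> unfolding k_def m_def by algebra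
    finally show ?thesis using no_rat_root[of "b/c"] by simp
  qed
next
  case True
  show ?thesis
  proof (cases "b = 0")
    case False
    with h True have "\<theta> = of_rat (-a/b)" by (simp add: of_rat_divide of_rat_minus field_simps)
    with theta_neq_of_rat show ?thesis by blast
  qed (use h True in simp)
qed

lemma discriminant_pos: "3 * \<theta>^2 - 4 * of_int p > 0"
proof (rule ccontr)
  assume "\<not> 3 * \<theta>^2 - 4 * of_int p > 0"
  define w where "w = sqrt (4 * of_int p - 3 * \<theta>^2)"
  have w2: "w^2 = 4 * of_int p - 3 * \<theta>^2"
    using \<open>\<not> 3 * \<theta>^2 - 4 * of_int p > 0\<close> unfolding w_def by simp
  \<comment> \<open>the roots \<open>(-\<theta> \<plusminus> w)/2\<close> of the quadratic cofactor \<open>x\<^sup>2 + \<theta> x + \<theta>\<^sup>2 - p\<close> would be real\<close>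
  have "(-\<theta> + e*w)/2 = \<theta>" if "e^2 = 1" for e
  proof (rule unique_root[rule_format])
    have "((-\<theta> + e*w)/2)^3 - of_int p * ((-\<theta> + e*w)/2) - of_int q
        = ((-\<theta> + e*w)/2)^3 - of_int p * ((-\<theta> + e*w)/2) - (\<theta>^3 - of_int p * \<theta>)"
      using root by simp
    also have "\<dots> = (e^2 * w^2 + 3 * \<theta>^2 - 4 * of_int p) * (e*w - 3*\<theta>) / 8"
      by (simp add: field_simps power2_eq_square power3_eq_cube)
    finally show "((-\<theta> + e*w)/2)^3 - of_int p * ((-\<theta> + e*w)/2) - of_int q = 0"
      using w2 that by simp
  qed
  from this[of 1] this[of "-1"] have "\<theta> = of_rat 0" by simp
  with theta_neq_of_rat show False by blast
qed

fun kval :: "rat \<times> rat \<times> rat \<Rightarrow> real" where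
  "kval (a, b, c) = of_rat a + of_rat b * \<theta> + of_rat c * \<theta>^2"

abbreviation kmult :: "rat \<times> rat \<times> rat \<Rightarrow> rat \<times> rat \<times> rat \<Rightarrow> rat \<times> rat \<times> rat" where
  "kmult \<equiv> cubic_mult (of_int p) (of_int q)"

abbreviation knorm :: "rat \<times> rat \<times> rat \<Rightarrow> rat" where
  "knorm \<equiv> cubic_norm (of_int p) (of_int q)"

lemma in_field_K_iff: "in_field_K \<theta> x \<longleftrightarrow> (\<exists>t. x = kval t)"
  unfolding in_field_K_def by auto

lemma kval_kmult: "kval (kmult s t) = kval s * kval t"
proof -
  have q: "real_of_int q = \<theta>^3 - of_int p * \<theta>" using root by simp
  have "kval (kmult (a, b, c) (a', b', c')) = kval (a, b, c) * kval (a', b', c')" for a b c a' b' c'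
    by (simp add: cubic_mult_def of_rat_add of_rat_mult q) algebra
  then show ?thesis by (cases s rule: prod_cases3; cases t rule: prod_cases3) simp
qed

lemma kval_inject: "kval s = kval t \<longleftrightarrow> s = t"
proof
  assume "kval s = kval t"
  then show "s = t"
    using coords_eq_0[of "fst s - fst t" "fst (snd s) - fst (snd t)" "snd (snd s) - snd (snd t)"]
    by (cases s rule: prod_cases3; cases t rule: prod_cases3) (simp add: of_rat_diff algebra_simps)
qed simp

lemma kval_power: "\<exists>t. kval s ^ k = kval t \<and> knorm t = knorm s ^ k"
proof (induction k)
  case 0
  show ?case by (intro exI[of _ "(1, 0, 0)"]) (simp add: cubic_norm_def)
next
  case (Suc k)
  then obtain t where "kval s ^ k = kval t" "knorm t = knorm s ^ k" by blast
  then show ?case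
    by (intro exI[of _ "kmult s t"]) (simp add: kval_kmult cubic_norm_mult)
qed

lemma of_rat_knorm:
  "of_rat (knorm (a, b, c)) = kval (a, b, c) *
     ((of_rat a - of_rat b * \<theta>/2 + of_rat c * (of_int p - \<theta>^2/2))^2
      + (3 * \<theta>^2 - 4 * of_int p)/4 * (of_rat b - of_rat c * \<theta>)^2)"
proof -
  have q: "real_of_int q = \<theta>^3 - of_int p * \<theta>" using root by simp
  show ?thesis
    by (simp add: cubic_norm_def of_rat_add of_rat_mult of_rat_diff of_rat_power q) algebra
qed

definition has_denom :: "int \<Rightarrow> real \<Rightarrow> bool" where
  "has_denom e y \<longleftrightarrow> (\<exists>u v w :: int. y = (of_int u + of_int v * \<theta> + of_int w * \<theta>^2) / of_int e)"

lemma has_denom_kval: "\<exists>e>0. has_denom e (kval t)"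
proof -
  obtain a b c where t: "t = (a, b, c)" by (cases t rule: prod_cases3)
  obtain na da where qa: "quotient_of a = (na, da)" by (cases "quotient_of a")
  obtain nb db where qb: "quotient_of b = (nb, db)" by (cases "quotient_of b")
  obtain nc dc where qc: "quotient_of c = (nc, dc)" by (cases "quotient_of c")
  have pos: "da > 0" "db > 0" "dc > 0" using qa qb qc quotient_of_denom_pos by blast+
  have "kval t = (of_int (na*db*dc) + of_int (nb*da*dc) * \<theta> + of_int (nc*da*db) * \<theta>^2) / of_int (da*db*dc)"
    unfolding t using pos
    by (simp add: quotient_of_div[OF qa] quotient_of_div[OF qb] quotient_of_div[OF qc] of_rat_divide field_simps)
  then have "has_denom (da*db*dc) (kval t)" unfolding has_denom_def by blast
  with pos show ?thesis by (intro exI[of _ "da*db*dc"]) auto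
qed

lemma has_denom_dvd:
  assumes "has_denom e y" "e dvd e'" "e' \<noteq> 0"
  shows "has_denom e' y"
proof -
  obtain u v w where y: "y = (of_int u + of_int v * \<theta> + of_int w * \<theta>^2) / of_int e"
    using assms(1) unfolding has_denom_def by blast
  obtain k where e': "e' = e * k" using assms(2) by blast
  with assms(3) have "k \<noteq> 0" by auto
  have "(of_int (u * k) + of_int (v * k) * \<theta> + of_int (w * k) * \<theta>^2) / of_int e'
      = (of_int k * (of_int u + of_int v * \<theta> + of_int w * \<theta>^2)) / (of_int k * of_int e)"
    unfolding e' by (simp add: algebra_simps)
  also have "\<dots> = y" unfolding y using \<open>k \<noteq> 0\<close> by simp
  finally have "y = (of_int (u * k) + of_int (v * k) * \<theta> + of_int (w * k) * \<theta>^2) / of_int e'" ..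
  then show ?thesis unfolding has_denom_def by blast
qed

lemma has_denom_add:
  assumes "has_denom e y" "has_denom e z"
  shows "has_denom e (y + z)"
proof -
  obtain u v w where y: "y = (of_int u + of_int v * \<theta> + of_int w * \<theta>^2) / of_int e"
    using assms(1) unfolding has_denom_def by blast
  obtain u' v' w' where z: "z = (of_int u' + of_int v' * \<theta> + of_int w' * \<theta>^2) / of_int e"
    using assms(2) unfolding has_denom_def by blast
  have "y + z = (of_int (u + u') + of_int (v + v') * \<theta> + of_int (w + w') * \<theta>^2) / of_int e"
    unfolding y z by (simp add: add_divide_distrib[symmetric] algebra_simps)
  then show ?thesis unfolding has_denom_def by blast
qed

lemma has_denom_of_int_mult:
  assumes "has_denom e y"
  shows "has_denom e (of_int k * y)"
proof -
  obtain u v w where y: "y = (of_int u + of_int v * \<theta> + of_int w * \<theta>^2) / of_int e"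
    using assms unfolding has_denom_def by blast
  have "of_int k * y = (of_int (k * u) + of_int (k * v) * \<theta> + of_int (k * w) * \<theta>^2) / of_int e"
    unfolding y by (simp add: algebra_simps)
  then show ?thesis unfolding has_denom_def by blast
qed

lemma has_denom_sum: "(\<And>i. i < (m::nat) \<Longrightarrow> has_denom e (f i)) \<Longrightarrow> has_denom e (\<Sum>i<m. f i)"
proof (induction m)
  case 0
  show ?case unfolding has_denom_def by (intro exI[of _ 0]) simp
qed (simp add: has_denom_add)

text \<open>The monic equation of \<open>x\<close> expresses every power of \<open>x\<close> through the first \<open>deg P\<close> ones.\<close>
lemma algebraic_int_powers_common_denom:
  assumes "algebraic_int x" and "in_field_K \<theta> x"
  shows "\<exists>e>0. \<forall>k. has_denom e (x^k)"
proof -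
  obtain P :: "int poly" where P: "poly (map_poly of_int P) x = 0" "lead_coeff P = 1"
    using assms(1) unfolding algebraic_int_altdef_ipoly by blast
  define m where "m = degree P"
  have "0 = (\<Sum>i\<le>m. of_int (coeff P i) * x^i)"
    using P(1) by (simp add: poly_altdef m_def degree_map_poly coeff_map_poly)
  also have "\<dots> = (\<Sum>i<m. of_int (coeff P i) * x^i) + x^m"
    using P(2) unfolding m_def by (simp flip: lessThan_Suc_atMost)
  finally have xm: "x^m = - (\<Sum>i<m. of_int (coeff P i) * x^i)" by linarith
  obtain t where x: "x = kval t" using assms(2) unfolding in_field_K_iff by blast
  have "\<exists>e>0. has_denom e (x^j)" for j
  proof -
    obtain t' where "x^j = kval t'" using kval_power[of t j] x by blast
    then show ?thesis using has_denom_kval[of t'] by simp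
  qed
  then obtain f where "\<forall>j. f j > 0 \<and> has_denom (f j) (x^j)"
    using choice[of "\<lambda>j e. e > 0 \<and> has_denom e (x^j)"] by blast
  then have f: "\<And>j. f j > 0" "\<And>j. has_denom (f j) (x^j)" by auto
  define e where "e = (\<Prod>j<m. f j)"
  have "e > 0" unfolding e_def using f by (simp add: prod_pos)
  moreover have "has_denom e (x^k)" for k
  proof (induction k rule: less_induct)
    case (less k)
    show ?case
    proof (cases "k < m")
      case True
      then have "f k dvd e" unfolding e_def by (intro dvd_prodI) auto
      with has_denom_dvd[OF f(2)] \<open>e > 0\<close> show ?thesis by simp
    next
      case False
      then have "x^k = x^(k-m) * x^m" by (simp flip: power_add)
      also have "\<dots> = - (\<Sum>i<m. of_int (coeff P i) * x^(k-m+i))"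
        unfolding xm by (simp add: sum_distrib_left power_add algebra_simps)
      also have "\<dots> = of_int (-1) * (\<Sum>i<m. of_int (coeff P i) * x^(k-m+i))" by simp
      finally have xk: "x^k = of_int (-1) * (\<Sum>i<m. of_int (coeff P i) * x^(k-m+i))" .
      have "has_denom e (\<Sum>i<m. of_int (coeff P i) * x^(k-m+i))"
        by (intro has_denom_sum has_denom_of_int_mult less.IH) (use False in auto)
      then show ?thesis unfolding xk by (rule has_denom_of_int_mult)
    qed
  qed
  ultimately show ?thesis by blast
qed

lemma knorm_Ints:
  assumes "in_OK \<theta> (kval s)"
  shows "knorm s \<in> \<int>"
proof -
  from assms have "algebraic_int (kval s)" "in_field_K \<theta> (kval s)"
    unfolding in_OK_def by auto
  from algebraic_int_powers_common_denom[OF this]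
  obtain e where e: "e > 0" "\<And>k. has_denom e (kval s ^ k)" by blast
  have scaled: "of_int (e^3) * knorm s ^ k \<in> \<int>" for k
  proof -
    obtain u v w where uvw: "kval s ^ k = (of_int u + of_int v * \<theta> + of_int w * \<theta>^2) / of_int e"
      using e(2)[of k] unfolding has_denom_def by blast
    obtain t where t: "kval s ^ k = kval t" "knorm t = knorm s ^ k"
      using kval_power by blast
    have "kval t = kval (of_int u / of_int e, of_int v / of_int e, of_int w / of_int e)"
      using t(1) uvw by (simp add: of_rat_divide add_divide_distrib)
    then have "knorm s ^ k = knorm (of_int u / of_int e, of_int v / of_int e, of_int w / of_int e)"
      using t(2) unfolding kval_inject by simp
    also have "\<dots> = of_int (cubic_norm p q (u, v, w)) / of_int e ^ 3"
      using e(1) by (simp only: cubic_norm_divide cubic_norm_of_int of_int_eq_0_iff)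
    finally show ?thesis using e(1) by simp
  qed
  show ?thesis
    by (rule Ints_if_scaled_powers_in_Ints[of "e^3", OF _ scaled]) (use e(1) in simp)
qed

lemma knorm_one: "knorm (1, 0, 0) = 1"
  by (simp add: cubic_norm_def)

lemma knorm_unit:
  assumes "unit_OK \<theta> (kval s)"
  shows "knorm s = 1 \<or> knorm s = -1"
proof -
  from assms have ok: "in_OK \<theta> (kval s)" "in_OK \<theta> (inverse (kval s))" "kval s \<noteq> 0"
    unfolding unit_OK_def by auto
  then obtain t where t: "inverse (kval s) = kval t"
    unfolding in_OK_def in_field_K_iff by blast
  with ok(3) have "kval (kmult s t) = kval (1, 0, 0)" by (simp add: kval_kmult flip: t)
  then have "kmult s t = (1, 0, 0)" by (simp only: kval_inject)
  then have "knorm s * knorm t = 1" by (metis cubic_norm_mult knorm_one)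
  moreover have "knorm s \<in> \<int>" "knorm t \<in> \<int>"
    using knorm_Ints ok(1,2) unfolding t by auto
  then obtain z z' where "knorm s = of_int z" "knorm t = of_int z'"
    by (elim Ints_cases)
  ultimately have "z * z' = 1" by (metis of_int_eq_1_iff of_int_mult)
  then show ?thesis using \<open>knorm s = of_int z\<close> by (auto simp: zmult_eq_1_iff)
qed

lemma unit_power_norm_form:
  assumes unit: "unit_OK \<theta> lam" and "lam > 0" and abc: "lam^n = kval (a, b, c)"
  shows "lam^n * ((of_rat a - of_rat b * \<theta>/2 + of_rat c * (of_int p - \<theta>^2/2))^2
           + (3 * \<theta>^2 - 4 * of_int p)/4 * (of_rat b - of_rat c * \<theta>)^2) = 1"
    (is "lam^n * ?Q = 1")
proof -
  obtain t where t: "lam = kval t"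
    using unit unfolding unit_OK_def in_OK_def in_field_K_iff by blast
  obtain t' where t': "lam^n = kval t'" "knorm t' = knorm t ^ n"
    using kval_power[of t n] unfolding t by blast
  have "t' = (a, b, c)" unfolding kval_inject[symmetric] using abc t'(1) by simp
  with t'(2) have "knorm (a, b, c) = knorm t ^ n" by simp
  with knorm_unit[of t] unit t have "knorm (a, b, c) = 1 \<or> knorm (a, b, c) = -1"
    by (cases "even n") auto
  moreover have "of_rat (knorm (a, b, c)) = lam^n * ?Q"
    using abc of_rat_knorm by simp
  moreover have "lam^n * ?Q \<ge> 0"
    using \<open>lam > 0\<close> discriminant_pos by simp
  ultimately show ?thesis by auto
qed

end

lemma square_root_defect:
  fixes X s E :: real
  assumes "X \<ge> 0" "s > 0" "X^2 = s^2 + E" "\<bar>E\<bar> < s^2/2"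
  shows "\<bar>X - s\<bar> * (17/10 * s) \<le> \<bar>E\<bar>"
proof -
  have "(7/10 * s)^2 = 49/100 * s^2" by (simp add: power2_eq_square)
  also have "\<dots> < X^2" using assms(3,4) zero_le_power2[of s] by linarith
  finally have "(7/10 * s)^2 < X^2" .
  then have "7/10 * s < X" using assms(1) by (rule power_less_imp_less_base)
  then have "\<bar>X - s\<bar> * (17/10 * s) \<le> \<bar>X - s\<bar> * (X + s)"
    by (intro mult_left_mono) auto
  also have "\<dots> = \<bar>(X - s) * (X + s)\<bar>" using assms(1,2) by (simp add: abs_mult)
  also have "\<dots> = \<bar>X^2 - s^2\<bar>" by (simp add: power2_eq_square algebra_simps)
  finally show ?thesis using assms(3) by simp
qed

lemma max_sqrt2_sq_bound:
  fixes th D :: real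
  assumes "D > 0"
  shows "1 + 9 * th^2 / D \<le> 5 * max (sqrt 2) (sqrt 2 * \<bar>th\<bar> / sqrt D) ^ 2"
proof -
  define M where "M = max (sqrt 2) (sqrt 2 * \<bar>th\<bar> / sqrt D)"
  have "(sqrt 2)^2 \<le> M^2"
    unfolding M_def by (rule power_mono) auto
  moreover have "(sqrt 2 * \<bar>th\<bar> / sqrt D)^2 \<le> M^2"
    unfolding M_def by (rule power_mono) (use assms in auto)
  ultimately have "2 \<le> M^2" "2 * th^2 / D \<le> M^2"
    using assms by (simp_all add: power_divide power_mult_distrib)
  then show ?thesis unfolding M_def by linarith
qed

lemma norm_form_defect_bound:
  fixes th P A B C L :: real
  assumes D: "3 * th^2 - 4 * P > 0"
    and form: "L * ((A - B * th/2 + C * (P - th^2/2))^2 + (3 * th^2 - 4 * P)/4 * (B - C * th)^2) = 1"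
    and rep: "L = A + B * th + C * th^2"
  shows "L * (C * (3 * th^2 - P) - L)^2 \<le> 1 + 9 * th^2 / (3 * th^2 - 4 * P)"
proof -
  define D R Y where "D = 3 * th^2 - 4 * P" and "R = A - B * th/2 + C * (P - th^2/2)"
    and "Y = (B - C * th)/2"
  have "D > 0" using D unfolding D_def .
  have form': "L * (R^2 + D * Y^2) = 1"
    using form unfolding D_def R_def Y_def by (simp add: power_divide)
  moreover have "R^2 + D * Y^2 \<ge> 0" using \<open>D > 0\<close> by simp
  ultimately have "L > 0" by (smt (verit) mult_nonpos_nonneg)
  have "C * (3 * th^2 - P) - L = - (R + 3 * th * Y)"
    unfolding rep R_def Y_def by (simp add: field_simps power2_eq_square)
  then have E: "(C * (3 * th^2 - P) - L)^2 = (R + 3 * th * Y)^2" by (simp only: power2_minus)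
  \<comment> \<open>Cauchy--Schwarz for the form \<open>R\<^sup>2 + D Y\<^sup>2\<close>\<close>
  have "(D + 9 * th^2) * (R^2 + D * Y^2) - D * (R + 3 * th * Y)^2 = (3 * th * R - D * Y)^2"
    by (simp add: power2_eq_square algebra_simps)
  then have "D * (R + 3 * th * Y)^2 \<le> (D + 9 * th^2) * (R^2 + D * Y^2)"
    by (metis diff_ge_0_iff_ge zero_le_power2)
  then have "L * (D * (R + 3 * th * Y)^2) \<le> L * ((D + 9 * th^2) * (R^2 + D * Y^2))"
    using \<open>L > 0\<close> by (simp add: mult_left_mono)
  also have "\<dots> = (D + 9 * th^2) * (L * (R^2 + D * Y^2))" by (rule mult.left_commute)
  also have "\<dots> = D + 9 * th^2" using form' by simp
  finally have "L * (D * (R + 3 * th * Y)^2) \<le> D + 9 * th^2" .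
  then show ?thesis
    using \<open>D > 0\<close> unfolding E D_def[symmetric] by (simp add: field_simps)
qed

lemma unit_coeff_sqrt_approx:
  fixes th P A B C s :: real
  defines "M \<equiv> max (sqrt 2) (sqrt 2 * \<bar>th\<bar> / sqrt (3 * th^2 - 4 * P))"
  assumes D: "3 * th^2 - 4 * P > 0" and s: "s > 0"
    and form: "s^2 * ((A - B * th/2 + C * (P - th^2/2))^2 + (3 * th^2 - 4 * P)/4 * (B - C * th)^2) = 1"
    and rep: "s^2 = A + B * th + C * th^2"
    and big: "s^3 > 2 * (1 + sqrt 2) * M"
  shows "C > 0 \<and> \<bar>s - sqrt (3 * th^2 - P) * sqrt C\<bar> < sqrt 2 * M / s^2"
proof -
  define f E where "f = 3 * th^2 - P" and "E = C * f - s^2"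
  have "f > 0" unfolding f_def using D by (smt (verit) zero_le_power2)
  have "s^2 * E^2 \<le> 5 * M^2"
    using norm_form_defect_bound[OF D form rep] max_sqrt2_sq_bound[OF D, of th]
    unfolding E_def f_def M_def by linarith
  have "sqrt 2 \<ge> 1.4" by (rule real_le_rsqrt) (simp add: power2_eq_square)
  moreover have "M \<ge> sqrt 2" unfolding M_def by simp
  ultimately have "M > 0" by simp
  have "4.8 * M \<le> 2 * (1 + sqrt 2) * M"
    using \<open>sqrt 2 \<ge> 1.4\<close> \<open>M > 0\<close> by (intro mult_right_mono) auto
  with big have "4.8 * M < s^3" by simp
  then have "(4.8 * M)^2 < (s^3)^2" using \<open>M > 0\<close> by (intro power_strict_mono) auto
  then have "576 * M^2 < 25 * s^6" by (simp add: power_mult_distrib power_divide flip: power_mult)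
  moreover have "s^6 > 0" using s by simp
  ultimately have "s^2 * E^2 < s^6/4"
    using \<open>s^2 * E^2 \<le> 5 * M^2\<close> by linarith
  moreover have "s^6 = s^2 * s^4" by (simp flip: power_add)
  ultimately have "s^2 * (4 * E^2) < s^2 * s^4" by linarith
  then have "4 * E^2 < s^4" by (rule mult_left_less_imp_less) simp
  then have "\<bar>E\<bar>^2 < (s^2/2)^2" by (simp add: power_divide flip: power_mult)
  then have small: "\<bar>E\<bar> < s^2/2" by (rule power_less_imp_less_base) simp
  have "C * f > 0" using small unfolding E_def by linarith
  then have "C > 0" using \<open>f > 0\<close> by (simp add: zero_less_mult_iff)
  define X where "X = sqrt f * sqrt C"
  have "X^2 = s^2 + E"
    unfolding X_def E_def using \<open>f > 0\<close> \<open>C > 0\<close> by (simp add: power_mult_distrib)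
  with small s have "\<bar>X - s\<bar> * (17/10 * s) \<le> \<bar>E\<bar>"
    by (intro square_root_defect) (use \<open>f > 0\<close> \<open>C > 0\<close> in \<open>auto simp: X_def\<close>)
  then have "(\<bar>X - s\<bar> * (17/10 * s))^2 \<le> \<bar>E\<bar>^2"
    by (rule power_mono) (use s in simp)
  then have "(\<bar>X - s\<bar> * (17/10 * s))^2 * s^2 \<le> E^2 * s^2"
    by (simp add: mult_right_mono)
  also have "\<dots> \<le> 5 * M^2" using \<open>s^2 * E^2 \<le> 5 * M^2\<close> by (simp add: mult.commute)
  also have "\<dots> < 2.89 * (sqrt 2 * M)^2" using \<open>M > 0\<close> by (simp add: power_mult_distrib)
  finally have "(\<bar>X - s\<bar> * s^2)^2 < (sqrt 2 * M)^2"
    by (simp add: power_mult_distrib power2_eq_square algebra_simps)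
  then have "\<bar>X - s\<bar> * s^2 < sqrt 2 * M"
    by (rule power_less_imp_less_base) (use \<open>M > 0\<close> in simp)
  then have "\<bar>s - X\<bar> < sqrt 2 * M / s^2" using s by (simp add: field_simps abs_minus_commute)
  then show ?thesis using \<open>C > 0\<close> unfolding X_def f_def by simp
qed

theorem mainTheorem10:
  fixes p q :: int and \<theta> lam :: real and d n :: nat and a b c :: rat
  assumes irred: "irreducible ([:of_int (-q), of_int (-p), 0, 1:] :: rat poly)"
    and root: "\<theta>^3 - of_int p * \<theta> - of_int q = 0"
    and unique_root: "\<forall>x::real. x^3 - of_int p * x - of_int q = 0 \<longrightarrow> x = \<theta>"
    and d_pos: "d > 0"
    and d_OK: "\<forall>x. in_OK \<theta> x \<longrightarrow>
                 (\<exists>u v w :: int. x = (of_int u + of_int v * \<theta> + of_int w * \<theta>^2) / real d)"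
    and unit: "unit_OK \<theta> lam"
    and lam_gt: "lam > 1"
    and n_pos: "n \<ge> 1"
    and abc: "lam^n = of_rat a + of_rat b * \<theta> + of_rat c * \<theta>^2"
    and big: "lam powr (3 * real n / 2) >
              2 * (1 + sqrt 2) * max (sqrt 2) (sqrt 2 * \<bar>\<theta>\<bar> / sqrt (3 * \<theta>^2 - 4 * of_int p))"
  shows "c > 0 \<and>
         \<bar>lam powr (real n / 2) - sqrt (3 * \<theta>^2 - of_int p) * sqrt (of_rat c)\<bar>
           < sqrt 2 * max (sqrt 2) (sqrt 2 * \<bar>\<theta>\<bar> / sqrt (3 * \<theta>^2 - 4 * of_int p)) / lam^n"
proof -
  interpret real_cubic_field p q \<theta> by unfold_locales fact+
  have "lam > 0" using lam_gt by simp
  define s where "s = lam powr (real n / 2)"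
  have "s > 0" unfolding s_def using lam_gt by simp
  have s2: "s^2 = lam^n"
    unfolding s_def using lam_gt by (simp add: powr_power powr_realpow)
  have s3: "s^3 = lam powr (3 * real n / 2)"
    unfolding s_def using lam_gt by (simp add: powr_power)
  note form = unit_power_norm_form[OF unit \<open>lam > 0\<close> abc[folded kval.simps]]
  from unit_coeff_sqrt_approx[OF discriminant_pos \<open>s > 0\<close> form[folded s2] abc[folded s2] big[folded s3]]
  show ?thesis unfolding s_def[symmetric] s2[symmetric] by simp
qed

end
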